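(* Let $Y\subset\mathbb{R}^2$ be any set, $\varepsilon>0$, and let $\alpha,\beta:S^1\to Y$ be essential loops that are homotopic in $Y$, with $\mathrm{diam}(\mathrm{im}(\alpha))<\varepsilon$ and $\mathrm{diam}(\mathrm{im}(\beta))<\varepsilon$. Then $\mathrm{diam}(\mathrm{im}(\alpha)\cup\mathrm{im}(\beta))<2\varepsilon$.
   Context: A loop $S^1\to Y$ is essential if it is not null-homotopic in $Y$. Diameters are Euclidean. *)

theory Defs
  imports "HOL-Analysis.Analysis"
begin

text \<open>The plane R^2 is modelled as the complex numbers (Euclidean metric);
S^1 is the unit circle sphere 0 1 in the plane.\<close>

definition circle_loop :: "complex set \<Rightarrow> (complex \<Rightarrow> complex) \<Rightarrow> bool" where
  "circle_loop Y f \<longleftrightarrow> continuous_on (sphere 0 1) f \<and> f ` sphere 0 1 \<subseteq> Y"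

definition essential_loop :: "complex set \<Rightarrow> (complex \<Rightarrow> complex) \<Rightarrow> bool" where
  "essential_loop Y f \<longleftrightarrow> circle_loop Y f \<and>
     \<not> (\<exists>c. homotopic_with_canon (\<lambda>x. True) (sphere 0 1) Y f (\<lambda>x. c))"

end

theory Submission
  imports Defs
begin

text \<open>If the convex hulls of the images of \<alpha> and \<beta> met, every point of \<alpha>'s image would be within
  diam(im \<alpha>) of a common point p, and likewise for \<beta>, so the union would have diameter
  below 2\<epsilon>. So suppose a line strictly separates the two hulls. Glue a null-homotopy of \<beta> in
  its (convex) hull, the homotopy from \<beta> to \<alpha>, and \<alpha> itself into a map \<Phi> of the whole plane,
  with the disc on one side of the line and everything far out on the other. The component
  of the complement of the far side containing the disc is a closed region V whose frontier
  is connected and mapped by \<Phi> into the line and into Y; a connected subset of a line is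
  convex, so by Dugundji \<Phi> can be redefined on V with values in that segment. The result
  extends \<alpha> over a large disc inside Y, contradicting essentiality of \<alpha>.\<close>

lemma complex_eq_0_if_inner_orthogonal:
  fixes a w :: complex
  assumes "inner a w = 0" "inner (\<i> * a) w = 0" "a \<noteq> 0"
  shows "w = 0"
proof -
  have "cnj a * w = Complex (inner a w) (inner (\<i> * a) w)"
    by (simp add: complex_eq_iff inner_complex_def algebra_simps)
  then have "cnj a * w = 0" using assms by (simp add: complex_eq_iff)
  then show ?thesis using assms by simp
qed

lemma connected_subset_line_imp_convex:
  fixes J :: "complex set"
  assumes conn: "connected J" and line: "J \<subseteq> {w. inner a w = b}" and "a \<noteq> 0"
  shows "convex J"
  unfolding convex_def
proof (intro ballI allI impI)
  fix x y u v assume xy: "x \<in> J" "y \<in> J" and uv: "0 \<le> (u::real)" "0 \<le> v" "u + v = 1"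
  define p where "p = u *\<^sub>R x + v *\<^sub>R y"
  let ?f = "inner (\<i> * a)"
  have "convex (?f ` J)"
    using connected_continuous_image[OF continuous_on_inner[OF continuous_on_const continuous_on_id] conn]
    by (simp add: is_interval_convex_1 flip: is_interval_connected_1)
  moreover have "?f x \<in> ?f ` J" "?f y \<in> ?f ` J"
    using xy by auto
  ultimately have "u *\<^sub>R ?f x + v *\<^sub>R ?f y \<in> ?f ` J"
    using uv by (intro convexD)
  then obtain q where q: "q \<in> J" "?f q = ?f p"
    by (auto simp: p_def inner_add_right)
  have "inner a x = b" "inner a y = b"
    using xy line by auto
  then have "inner a p = (u + v) * b"
    by (simp add: p_def inner_add_right distrib_right)
  then have "inner a (q - p) = 0"
    using q line uv(3) by (auto simp: inner_diff_right)
  moreover have "inner (\<i> * a) (q - p) = 0"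
    using q by (simp add: inner_diff_right)
  ultimately have "q = p"
    using complex_eq_0_if_inner_orthogonal \<open>a \<noteq> 0\<close> by fastforce
  then show "u *\<^sub>R x + v *\<^sub>R y \<in> J" using q p_def by simp
qed

lemma homotopy_extends_disc_map_to_space:
  fixes \<alpha> \<beta> g :: "'a::real_normed_vector \<Rightarrow> 'b::real_normed_vector"
  assumes hom: "homotopic_with_canon (\<lambda>x. True) (sphere 0 1) Y \<alpha> \<beta>"
    and contg: "continuous_on (cball 0 1) g" and g_sphere: "\<forall>x\<in>sphere 0 1. g x = \<beta> x"
  obtains \<Phi> where "continuous_on UNIV \<Phi>" "\<And>z. norm z \<le> 1 \<Longrightarrow> \<Phi> z = g z"
    "\<And>z. 1 < norm z \<Longrightarrow> \<Phi> z \<in> Y" "\<And>z. 2 \<le> norm z \<Longrightarrow> \<Phi> z = \<alpha> (sgn z)"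
proof -
  obtain H where contH: "continuous_on ({0..1::real} \<times> sphere 0 1) H"
    and HY: "H ` ({0..1} \<times> sphere 0 1) \<subseteq> Y" and H0: "\<And>x. H (0, x) = \<alpha> x" and H1: "\<And>x. H (1, x) = \<beta> x"
    using hom by (auto simp: homotopic_with_def image_subset_iff_funcset)
  define t where "t z = min 1 (max 0 (2 - norm z))" for z :: 'a
  define \<Phi> where "\<Phi> z = (if norm z \<le> 1 then g z else H (t z, sgn z))" for z
  have polar: "(t z, sgn z) \<in> {0..1} \<times> sphere 0 1" if "1 \<le> norm z" for z
    using that by (auto simp: t_def norm_sgn)
  have "continuous_on {z. 1 \<le> norm z} (\<lambda>z. (t z, sgn z))"
    unfolding t_def by (intro continuous_intros) auto
  then have "continuous_on {z. 1 \<le> norm z} (\<lambda>z. H (t z, sgn z))"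
    using polar by (intro continuous_on_compose2[OF contH]) auto
  then have "continuous_on (cball 0 1 \<union> {z. 1 \<le> norm z}) \<Phi>"
    unfolding \<Phi>_def
    by (intro continuous_on_cases contg)
       (auto simp: closed_Collect_le continuous_on_norm_id t_def g_sphere H1 sgn_div_norm)
  moreover have "cball 0 1 \<union> {z. 1 \<le> norm z} = UNIV" by auto
  ultimately have "continuous_on UNIV \<Phi>" by metis
  moreover have "\<Phi> z \<in> Y" if "1 < norm z" for z
    using that polar[of z] HY by (auto simp: \<Phi>_def)
  moreover have "\<Phi> z = \<alpha> (sgn z)" if "2 \<le> norm z" for z
    using that by (simp add: \<Phi>_def t_def H0)
  ultimately show thesis
    using that by (simp add: \<Phi>_def)
qed

lemma separating_region_with_connected_level_frontier:
  fixes h :: "'a::euclidean_space \<Rightarrow> real"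
  assumes conth: "continuous_on UNIV h"
    and S: "connected S" "s \<in> S" "\<forall>z\<in>S. b < h z"
    and T: "connected T" "t \<in> T" "\<forall>z\<in>T. h z < b"
  obtains V where "closed V" "S \<subseteq> V" "V \<inter> T = {}" "connected (frontier V)"
    "frontier V \<noteq> {}" "frontier V \<subseteq> {z. h z = b}"
proof -
  define P where "P = {z. h z < b}"
  define Q where "Q = connected_component_set P t"
  define V where "V = connected_component_set (- Q) s"
  have "open P"
    unfolding P_def using conth by (simp add: open_Collect_less continuous_on_const)
  then have "open Q"
    by (simp add: Q_def open_connected_component)
  have TQ: "T \<subseteq> Q"
    unfolding Q_def using T by (intro connected_component_maximal) (auto simp: P_def)
  have "S \<subseteq> - Q"
    using S(3) connected_component_subset[of P t] by (force simp: Q_def P_def)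
  then have SV: "S \<subseteq> V"
    unfolding V_def using S by (intro connected_component_maximal) auto
  have VQ: "V \<subseteq> - Q"
    by (simp add: V_def connected_component_subset)
  have V_comp: "V \<in> components (- Q)"
    unfolding V_def using \<open>S \<subseteq> - Q\<close> S(2) by (auto intro: componentsI)
  have "frontier P \<subseteq> {z. h z = b}"
  proof -
    have "closure P \<subseteq> {z. h z \<le> b}"
      using conth by (intro closure_minimal) (auto simp: P_def closed_Collect_le continuous_on_const)
    then show ?thesis
      using \<open>open P\<close> by (auto simp: frontier_def interior_open P_def)
  qed
  moreover have "frontier V \<subseteq> frontier P"
    using frontier_of_components_subset[OF V_comp] frontier_of_connected_component_subset[of P t]
    by (auto simp: Q_def frontier_complement)
  moreover have "connected (frontier V)"
    using connected_frontier_component_complement[OF _ V_comp] by (simp add: Q_def)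
  moreover have "frontier V \<noteq> {}"
    using SV VQ TQ S(2) T(2) by (intro frontier_not_empty) auto
  moreover have "closed V"
    unfolding V_def using \<open>open Q\<close> by (simp add: closed_Compl closed_connected_component)
  ultimately show thesis
    using that SV VQ TQ by blast
qed

lemma replace_inside_closed_by_frontier_values:
  fixes \<Phi> :: "'a::{metric_space,second_countable_topology} \<Rightarrow> 'b::real_inner"
  assumes cont: "continuous_on UNIV \<Phi>" and "closed V"
    and conv: "convex (\<Phi> ` frontier V)" and ne: "frontier V \<noteq> {}"
  obtains G where "continuous_on UNIV G" "\<And>z. z \<notin> V \<Longrightarrow> G z = \<Phi> z"
    "G ` V \<subseteq> \<Phi> ` frontier V"
proof -
  obtain e where conte: "continuous_on UNIV e" and e_im: "e ` UNIV \<subseteq> \<Phi> ` frontier V"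
    and e_fr: "\<And>x. x \<in> frontier V \<Longrightarrow> e x = \<Phi> x"
  proof (rule Dugundji[OF conv])
    show "\<Phi> ` frontier V \<noteq> {}" using ne by simp
    show "closedin (top_of_set UNIV) (frontier V)" by (simp add: frontier_closed)
    show "continuous_on (frontier V) \<Phi>" using cont by (rule continuous_on_subset) simp
  qed (use that in auto)
  define G where "G z = (if z \<in> V then e z else \<Phi> z)" for z
  have "closure (- V) \<inter> V \<subseteq> frontier V"
    using \<open>closed V\<close> by (simp add: frontier_def closure_complement closure_closed Diff_eq inf_commute)
  then have "continuous_on (V \<union> closure (- V)) G"
    unfolding G_def using \<open>closed V\<close> conte cont e_fr
    by (intro continuous_on_cases) (auto intro: continuous_on_subset)
  moreover have "V \<union> closure (- V) = UNIV"
    using closure_subset[of "- V"] by auto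
  ultimately have "continuous_on UNIV G" by metis
  moreover have "G ` V \<subseteq> \<Phi> ` frontier V"
    using e_im by (auto simp: G_def)
  ultimately show thesis
    using that by (simp add: G_def)
qed

lemma plane_map_into_set_agreeing_far_out:
  fixes \<Phi> :: "complex \<Rightarrow> complex"
  assumes cont: "continuous_on UNIV \<Phi>" and "a \<noteq> 0"
    and inner_disc: "\<And>z. norm z \<le> 1 \<Longrightarrow> b < inner a (\<Phi> z)"
    and outer_far: "\<And>z. 2 \<le> norm z \<Longrightarrow> inner a (\<Phi> z) < b"
    and into_Y: "\<And>z. 1 < norm z \<Longrightarrow> \<Phi> z \<in> Y"
  obtains G where "continuous_on UNIV G" "range G \<subseteq> Y" "\<And>z. 2 \<le> norm z \<Longrightarrow> G z = \<Phi> z"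
proof -
  obtain V where "closed V" and disc_V: "cball 0 1 \<subseteq> V" and far_V: "V \<inter> - ball 0 2 = {}"
    and fr_conn: "connected (frontier V)" and fr_ne: "frontier V \<noteq> {}"
    and fr_line: "frontier V \<subseteq> {z. inner a (\<Phi> z) = b}"
  proof (rule separating_region_with_connected_level_frontier
      [where h = "\<lambda>z. inner a (\<Phi> z)" and S = "cball 0 1" and s = 0 and T = "- ball 0 2" and t = 2])
    show "continuous_on UNIV (\<lambda>z. inner a (\<Phi> z))"
      using cont by (intro continuous_intros)
    show "connected (- ball (0::complex) 2)"
      by (rule connected_complement_bounded_convex) auto
    show "\<forall>z\<in>cball 0 1. b < inner a (\<Phi> z)"
      using inner_disc by simp
    show "\<forall>z\<in>- ball 0 2. inner a (\<Phi> z) < b"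
      using outer_far by (simp add: not_less)
  qed (auto intro: that simp del: ex_in_conv)
  have fr_Y: "\<Phi> ` frontier V \<subseteq> Y"
    using fr_line inner_disc into_Y by (force simp: not_le[symmetric])
  have "connected (\<Phi> ` frontier V)"
    using cont fr_conn by (intro connected_continuous_image) (auto intro: continuous_on_subset)
  then have "convex (\<Phi> ` frontier V)"
    using fr_line \<open>a \<noteq> 0\<close> by (intro connected_subset_line_imp_convex[where b = b]) auto
  then obtain G where "continuous_on UNIV G" and G_out: "\<And>z. z \<notin> V \<Longrightarrow> G z = \<Phi> z"
    and G_V: "G ` V \<subseteq> \<Phi> ` frontier V"
    using replace_inside_closed_by_frontier_values[OF cont \<open>closed V\<close> _ fr_ne] by blast
  moreover have "G z \<in> Y" for z
  proof (cases "z \<in> V")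
    case False
    then have "1 < norm z" using disc_V by (force simp: not_le)
    then show ?thesis using False G_out into_Y by simp
  qed (use G_V fr_Y in auto)
  moreover have "G z = \<Phi> z" if "2 \<le> norm z" for z
  proof -
    have "z \<in> - ball 0 2" using that by simp
    then show ?thesis using far_V G_out by blast
  qed
  ultimately show thesis using that by blast
qed

lemma separating_hyperplane_convex_hulls:
  fixes A B :: "'a::euclidean_space set"
  assumes "compact A" "A \<noteq> {}" "compact B" "B \<noteq> {}" "convex hull A \<inter> convex hull B = {}"
  obtains a b where "a \<noteq> 0" "\<And>x. x \<in> convex hull A \<Longrightarrow> inner a x < b"
    "\<And>x. x \<in> convex hull B \<Longrightarrow> b < inner a x"
proof -
  have "\<exists>a b. (\<forall>x\<in>convex hull A. inner a x < b) \<and> (\<forall>x\<in>convex hull B. inner a x > b)"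
    using assms by (intro separating_hyperplane_compact_closed) (auto simp: compact_convex_hull compact_imp_closed)
  then obtain a b where sep_A: "\<And>x. x \<in> convex hull A \<Longrightarrow> inner a x < b"
    and sep_B: "\<And>x. x \<in> convex hull B \<Longrightarrow> b < inner a x"
    by blast
  obtain x y where "x \<in> A" "y \<in> B" using assms(2,4) by blast
  then have "inner a x < inner a y"
    using sep_A[of x] sep_B[of y] by (simp add: hull_inc)
  then have "a \<noteq> 0" by auto
  then show thesis using sep_A sep_B by (rule that)
qed

lemma sphere_map_extends_into_convex_hull:
  fixes f :: "'a::euclidean_space \<Rightarrow> 'b::real_normed_vector"
  assumes "continuous_on (sphere c r) f"
  obtains g where "continuous_on (cball c r) g" "g ` cball c r \<subseteq> convex hull (f ` sphere c r)"
    "\<forall>x\<in>sphere c r. g x = f x"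
proof -
  obtain k where "homotopic_with_canon (\<lambda>x. True) (sphere c r) (convex hull (f ` sphere c r)) f (\<lambda>x. k)"
  proof (rule nullhomotopic_into_contractible[OF assms])
    show "f \<in> sphere c r \<rightarrow> convex hull (f ` sphere c r)"
      by (auto simp: hull_inc)
  qed (auto simp: convex_imp_contractible)
  then have "\<exists>k. homotopic_with_canon (\<lambda>x. True) (sphere c r) (convex hull (f ` sphere c r)) f (\<lambda>x. k)"
    by blast
  then show thesis
    unfolding nullhomotopic_from_sphere_extension using that by blast
qed

lemma convex_hulls_meet_if_homotopic_to_essential:
  fixes \<alpha> \<beta> :: "complex \<Rightarrow> complex"
  assumes hom: "homotopic_with_canon (\<lambda>x. True) (sphere 0 1) Y \<alpha> \<beta>"
    and essential: "\<nexists>c. homotopic_with_canon (\<lambda>x. True) (sphere 0 1) Y \<alpha> (\<lambda>x. c)"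
  shows "convex hull (\<alpha> ` sphere 0 1) \<inter> convex hull (\<beta> ` sphere 0 1) \<noteq> {}"
proof
  define A where "A = \<alpha> ` sphere 0 1"
  define B where "B = \<beta> ` sphere 0 1"
  assume disjoint: "convex hull A \<inter> convex hull B = {}"
  have "continuous_on (sphere 0 1) \<alpha>" "continuous_on (sphere 0 1) \<beta>"
    using homotopic_with_imp_continuous[OF hom] by auto
  then have compact_ne: "compact A" "A \<noteq> {}" "compact B" "B \<noteq> {}"
    by (auto simp: A_def B_def compact_continuous_image)
  obtain a b where "a \<noteq> 0" and sep_A: "\<And>x. x \<in> convex hull A \<Longrightarrow> inner a x < b"
    and sep_B: "\<And>x. x \<in> convex hull B \<Longrightarrow> b < inner a x"
    using separating_hyperplane_convex_hulls[OF compact_ne disjoint] by blast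
  obtain g where g_cont: "continuous_on (cball 0 1) g" and g_B: "g ` cball 0 1 \<subseteq> convex hull B"
    and g_sphere: "\<forall>x\<in>sphere 0 1. g x = \<beta> x"
    using sphere_map_extends_into_convex_hull[OF \<open>continuous_on (sphere 0 1) \<beta>\<close>]
    unfolding B_def by blast
  obtain \<Phi> where cont: "continuous_on UNIV \<Phi>" and \<Phi>_disc: "\<And>z. norm z \<le> 1 \<Longrightarrow> \<Phi> z = g z"
    and \<Phi>_Y: "\<And>z. 1 < norm z \<Longrightarrow> \<Phi> z \<in> Y"
    and \<Phi>_far: "\<And>z. 2 \<le> norm z \<Longrightarrow> \<Phi> z = \<alpha> (sgn z)"
    using homotopy_extends_disc_map_to_space[OF hom g_cont g_sphere] by blast
  have inner_disc: "b < inner a (\<Phi> z)" if "norm z \<le> 1" for z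
  proof -
    have "g z \<in> convex hull B" using that g_B by auto
    then show ?thesis using that sep_B \<Phi>_disc by simp
  qed
  have outer_far: "inner a (\<Phi> z) < b" if "2 \<le> norm z" for z
  proof -
    have "sgn z \<in> sphere 0 1" using that by (auto simp: norm_sgn)
    then have "\<Phi> z \<in> A" using that \<Phi>_far by (simp add: A_def)
    then show ?thesis using sep_A hull_subset[of A convex] by auto
  qed
  obtain G where G_cont: "continuous_on UNIV G" and G_Y: "range G \<subseteq> Y"
    and G_far: "\<And>z. 2 \<le> norm z \<Longrightarrow> G z = \<Phi> z"
    using plane_map_into_set_agreeing_far_out[OF cont \<open>a \<noteq> 0\<close> inner_disc outer_far \<Phi>_Y] by blast
  have "continuous_on (cball 0 1) (\<lambda>z. G (2 * z))"
    by (rule continuous_on_compose2[OF G_cont]) (auto intro: continuous_intros)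
  moreover have "(\<lambda>z. G (2 * z)) ` cball 0 1 \<subseteq> Y"
    using G_Y by auto
  moreover have "G (2 * x) = \<alpha> x" if "x \<in> sphere 0 1" for x
  proof -
    have "norm (2 * x) = 2" "sgn (2 * x) = x"
      using that by (simp_all add: norm_mult sgn_div_norm)
    then show ?thesis using G_far \<Phi>_far by simp
  qed
  ultimately have "\<exists>c. homotopic_with_canon (\<lambda>x. True) (sphere 0 1) Y \<alpha> (\<lambda>x. c)"
    unfolding nullhomotopic_from_sphere_extension by blast
  with essential show False by blast
qed

lemma diameter_Un_le_if_convex_hulls_meet:
  fixes A B :: "'a::real_normed_vector set"
  assumes "bounded A" "bounded B" and p: "p \<in> convex hull A" "p \<in> convex hull B"
  shows "diameter (A \<union> B) \<le> diameter A + diameter B"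
proof (rule diameter_le)
  have near_p: "dist x p \<le> diameter S" if "bounded S" "x \<in> S" "p \<in> convex hull S" for x S
  proof -
    have "convex hull S \<subseteq> cball x (diameter S)"
      using diameter_bounded_bound[OF that(1,2)] by (intro hull_minimal) (auto simp: subset_iff)
    then show ?thesis using that(3) by auto
  qed
  have across: "dist x y \<le> diameter A + diameter B" if "x \<in> A" "y \<in> B" for x y
  proof -
    have "dist x y \<le> dist x p + dist y p" by (rule dist_triangle2)
    also have "\<dots> \<le> diameter A + diameter B"
      using near_p[OF assms(1) that(1) p(1)] near_p[OF assms(2) that(2) p(2)] by (rule add_mono)
    finally show ?thesis .
  qed
  fix x y assume "x \<in> A \<union> B" "y \<in> A \<union> B"
  then have "dist x y \<le> diameter A + diameter B"
    using across[of x y] across[of y x]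
      diameter_bounded_bound[OF assms(1), of x y] diameter_bounded_bound[OF assms(2), of x y]
      diameter_ge_0[OF assms(1)] diameter_ge_0[OF assms(2)]
    by (auto simp: dist_commute)
  then show "norm (x - y) \<le> diameter A + diameter B"
    by (simp add: dist_norm)
qed (use p in auto)

theorem mainTheorem12:
  fixes Y :: "complex set" and \<epsilon> :: real and \<alpha> \<beta> :: "complex \<Rightarrow> complex"
  assumes "\<epsilon> > 0"
    and "essential_loop Y \<alpha>" and "essential_loop Y \<beta>"
    and "homotopic_with_canon (\<lambda>x. True) (sphere 0 1) Y \<alpha> \<beta>"
    and "diameter (\<alpha> ` sphere 0 1) < \<epsilon>"
    and "diameter (\<beta> ` sphere 0 1) < \<epsilon>"
  shows "diameter (\<alpha> ` sphere 0 1 \<union> \<beta> ` sphere 0 1) < 2 * \<epsilon>"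
proof -
  obtain p where "p \<in> convex hull (\<alpha> ` sphere 0 1)" "p \<in> convex hull (\<beta> ` sphere 0 1)"
    using convex_hulls_meet_if_homotopic_to_essential[OF assms(4)] assms(2)
    unfolding essential_loop_def by blast
  moreover have "bounded (\<alpha> ` sphere 0 1)" "bounded (\<beta> ` sphere 0 1)"
    using assms(2,3) unfolding essential_loop_def circle_loop_def
    by (auto intro!: compact_imp_bounded compact_continuous_image)
  ultimately have "diameter (\<alpha> ` sphere 0 1 \<union> \<beta> ` sphere 0 1)
      \<le> diameter (\<alpha> ` sphere 0 1) + diameter (\<beta> ` sphere 0 1)"
    by (rule diameter_Un_le_if_convex_hulls_meet[rotated 2])
  with assms(5,6) show ?thesis by linarith
qed

end
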